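(* Let $P$ be a program, $s$ a state, $U\subseteq S$ and $\mathtt p\in[0,1)\cap\mathbb Q$. Then $\langle P,s\rangle\models\Box\,\mathbb P_{>\mathtt p}U$ if and only if there exists $n\in\mathbb N$ such that every $\mu\in F_n(P,s)$ satisfies $\mu(U)>\mathtt p$.
   Context: Setting: a set $S$ of states; finitely supported (sub)probability distributions $\mathcal V_{=1,\omega}(X)$, $\mathcal V_{\le1,\omega}(X)$ written $\sum_ip_i\cdot x_i$, $\bot$ zero distribution, $\delta_s$ point mass. Programs $P::=\mathtt{skip}\mid\mathtt a\mid P;P\mid P\parallel P\mid P+_{\mathtt p}P\mid P+P\mid\mathtt{if}\ \mathtt b\ \mathtt{then}\ P\ \mathtt{else}\ P\mid\mathtt{while}\ \mathtt b\ P$ with given $[\![\mathtt a]\!]:S\to\mathcal V_{=1,\omega}(S)$, $[\![\mathtt b]\!]:S\to\{\mathtt{tt},\mathtt{ff}\}$. Small-step $\longrightarrow\subseteq(\mathrm{Pr}\times S)\times\mathcal V_{=1,\omega}(S+\mathrm{Pr}\times S)$: least relation with $\langle\mathtt a,s\rangle\to[\![\mathtt a]\!](s)$; $\langle\mathtt{skip},s\rangle\to1\cdot s$; if $\langle P,s\rangle\to\sum_ip_i\langle P_i,s_i\rangle+\sum_jp_js_j$ then $\langle P;Q,s\rangle\to\sum_ip_i\langle P_i;Q,s_i\rangle+\sum_jp_j\langle Q,s_j\rangle$ and $\langle P\parallel Q,s\rangle\to\sum_ip_i\langle P_i\parallel Q,s_i\rangle+\sum_jp_j\langle Q,s_j\rangle$;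 symmetric rule for $\parallel$ with $Q$ stepping (residual $P$); $\langle P+_{\mathtt p}Q,s\rangle\to\mathtt p\mu+(1-\mathtt p)\nu$ if $\langle P,s\rangle\to\mu,\langle Q,s\rangle\to\nu$; $\langle P+Q,s\rangle\to\mu$ if $\langle P,s\rangle\to\mu$ or $\langle Q,s\rangle\to\mu$; $\mathtt{if}$ steps with probability 1 to $\langle P,s\rangle$/$\langle Q,s\rangle$ according to $[\![\mathtt b]\!](s)$; $\langle\mathtt{while}\ \mathtt b\ P,s\rangle\to1\cdot\langle P;\mathtt{while}\ \mathtt b\ P,s\rangle$ if $\mathtt{tt}$, $\to1\cdot s$ if $\mathtt{ff}$. Schedulers: partial maps $\mathcal S$ from $I=((\mathrm{Pr}\times S)\times\mathcal V_{=1,\omega}(S+\mathrm{Pr}\times S))^*\times(\mathrm{Pr}\times S)$ (elements $h\langle P,s\rangle$) to $\mathcal V_{=1,\omega}(S+\mathrm{Pr}\times S)$ whose value at $h\langle P,s\rangle$ (if defined) is a finite convex combination of $\{\mu\mid\langle P,s\rangle\to\mu\}$. Big-step: $h\langle P,s\rangle\Downarrow^{\mathcal S,0}\bot$; $h\langle P,s\rangle\Downarrow^{\mathcal S,n+1}\sum_kp_k(\sum_ip_{k,i}\mu_{k,i}+\sum_jp_{k,j}s_{k,j})$ whenever $\mathcal S(h\langle P,s\rangle)=\sum_kp_k\nu_k$, $\nu_k=\sum_ip_{k,i}\langle P_{k,i},s_{k,i}\rangle+\sum_jp_{k,j}s_{k,j}$, and $h\langle P,s\rangle\nu_k\langle P_{k,i},s_{k,i}\rangle\Downarrow^{\mathcal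 S,n}\mu_{k,i}$ for all $k,i$. $\mathcal S$ is non-blocking w.r.t. $\langle P,s\rangle$ if for every $n$ some $\mu$ has $\langle P,s\rangle\Downarrow^{\mathcal S,n}\mu$. $\langle P,s\rangle\models\Box\,\mathbb P_{>\mathtt p}U$ means: for every scheduler $\mathcal S$ non-blocking w.r.t. $\langle P,s\rangle$ there exist $n\in\mathbb N$ and $\mu$ with $\langle P,s\rangle\Downarrow^{\mathcal S,n}\mu$ and $\mu(U)>\mathtt p$. Sets $F_n(P,s)$: $F_0=\{\bot\}$, $F_{n+1}(P,s)=\bigcup\{\sum_ip_i\cdot F_n(P_i,s_i)+\sum_jp_j\cdot\delta_{s_j}\mid\langle P,s\rangle\to\sum_ip_i\langle P_i,s_i\rangle+\sum_jp_js_j\}$ (Minkowski sums/scalings). *)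

theory Defs
  imports Complex_Main
begin

text \<open>Finitely supported (sub)probability distributions are represented as
  real-valued functions; the support is the set of points of nonzero mass.\<close>

type_synonym 'x dist = "'x \<Rightarrow> real"

definition supp :: "'x dist \<Rightarrow> 'x set" where
  "supp \<mu> = {x. \<mu> x \<noteq> 0}"

definition is_dist :: "'x dist \<Rightarrow> bool" where
  "is_dist \<mu> \<longleftrightarrow> (\<forall>x. 0 \<le> \<mu> x) \<and> finite (supp \<mu>) \<and> sum \<mu> (supp \<mu>) = 1"

definition mass :: "'x dist \<Rightarrow> 'x set \<Rightarrow> real" where
  "mass \<mu> U = sum \<mu> (supp \<mu> \<inter> U)"

definition zero_dist :: "'x dist" where
  "zero_dist = (\<lambda>_. 0)"

definition point :: "'x \<Rightarrow> 'x dist" where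
  "point x = (\<lambda>y. if y = x then 1 else 0)"

definition dmap :: "('x \<Rightarrow> 'y) \<Rightarrow> 'x dist \<Rightarrow> 'y dist" where
  "dmap f \<mu> = (\<lambda>y. sum \<mu> {x \<in> supp \<mu>. f x = y})"

datatype ('a, 'b) prog =
    Skip
  | Act 'a
  | Seq "('a, 'b) prog" "('a, 'b) prog"
  | Par "('a, 'b) prog" "('a, 'b) prog"
  | PCh real "('a, 'b) prog" "('a, 'b) prog"
  | NCh "('a, 'b) prog" "('a, 'b) prog"
  | If 'b "('a, 'b) prog" "('a, 'b) prog"
  | While 'b "('a, 'b) prog"

type_synonym ('a, 'b, 's) conf = "('a, 'b) prog \<times> 's"
type_synonym ('a, 'b, 's) res = "'s + ('a, 'b) prog \<times> 's"

definition seq_cont :: "('a, 'b) prog \<Rightarrow> ('a, 'b, 's) res \<Rightarrow> ('a, 'b, 's) res" where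
  "seq_cont Q r = (case r of Inl t \<Rightarrow> Inr (Q, t) | Inr (P', t) \<Rightarrow> Inr (Seq P' Q, t))"

definition parL_cont :: "('a, 'b) prog \<Rightarrow> ('a, 'b, 's) res \<Rightarrow> ('a, 'b, 's) res" where
  "parL_cont Q r = (case r of Inl t \<Rightarrow> Inr (Q, t) | Inr (P', t) \<Rightarrow> Inr (Par P' Q, t))"

definition parR_cont :: "('a, 'b) prog \<Rightarrow> ('a, 'b, 's) res \<Rightarrow> ('a, 'b, 's) res" where
  "parR_cont P r = (case r of Inl t \<Rightarrow> Inr (P, t) | Inr (Q', t) \<Rightarrow> Inr (Par P Q', t))"

inductive step :: "('a \<Rightarrow> 's \<Rightarrow> 's dist) \<Rightarrow> ('b \<Rightarrow> 's \<Rightarrow> bool) \<Rightarrow>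
    ('a, 'b) prog \<Rightarrow> 's \<Rightarrow> ('a, 'b, 's) res dist \<Rightarrow> bool"
  for act test where
  st_act: "step act test (Act a) s (dmap Inl (act a s))"
| st_skip: "step act test Skip s (point (Inl s))"
| st_seq: "step act test P s \<mu> \<Longrightarrow> step act test (Seq P Q) s (dmap (seq_cont Q) \<mu>)"
| st_parL: "step act test P s \<mu> \<Longrightarrow> step act test (Par P Q) s (dmap (parL_cont Q) \<mu>)"
| st_parR: "step act test Q s \<mu> \<Longrightarrow> step act test (Par P Q) s (dmap (parR_cont P) \<mu>)"
| st_pch: "\<lbrakk>0 \<le> p; p \<le> 1; step act test P s \<mu>; step act test Q s \<nu>\<rbrakk> \<Longrightarrow>
           step act test (PCh p P Q) s (\<lambda>x. p * \<mu> x + (1 - p) * \<nu> x)"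
| st_nchL: "step act test P s \<mu> \<Longrightarrow> step act test (NCh P Q) s \<mu>"
| st_nchR: "step act test Q s \<mu> \<Longrightarrow> step act test (NCh P Q) s \<mu>"
| st_ifT: "test b s \<Longrightarrow> step act test (If b P Q) s (point (Inr (P, s)))"
| st_ifF: "\<not> test b s \<Longrightarrow> step act test (If b P Q) s (point (Inr (Q, s)))"
| st_whileT: "test b s \<Longrightarrow> step act test (While b P) s (point (Inr (Seq P (While b P), s)))"
| st_whileF: "\<not> test b s \<Longrightarrow> step act test (While b P) s (point (Inl s))"

text \<open>Histories h<P,s>: a list of (configuration, chosen transition) pairs followed by
  the current configuration. Schedulers are partial maps from these to distributions.\<close>
type_synonym ('a, 'b, 's) hist =
  "(('a, 'b, 's) conf \<times> ('a, 'b, 's) res dist) list \<times> ('a, 'b, 's) conf"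

type_synonym ('a, 'b, 's) sched = "('a, 'b, 's) hist \<Rightarrow> ('a, 'b, 's) res dist option"

definition comb :: "(real \<times> 'x dist) list \<Rightarrow> 'x dist" where
  "comb ws = (\<lambda>x. \<Sum>k<length ws. fst (ws ! k) * snd (ws ! k) x)"

definition convex_steps :: "('a \<Rightarrow> 's \<Rightarrow> 's dist) \<Rightarrow> ('b \<Rightarrow> 's \<Rightarrow> bool) \<Rightarrow>
    ('a, 'b, 's) conf \<Rightarrow> (real \<times> ('a, 'b, 's) res dist) list \<Rightarrow> bool" where
  "convex_steps act test c ws \<longleftrightarrow>
     (\<forall>k<length ws. 0 \<le> fst (ws ! k) \<and> step act test (fst c) (snd c) (snd (ws ! k)))
     \<and> (\<Sum>k<length ws. fst (ws ! k)) = 1"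

definition valid_sched :: "('a \<Rightarrow> 's \<Rightarrow> 's dist) \<Rightarrow> ('b \<Rightarrow> 's \<Rightarrow> bool) \<Rightarrow>
    ('a, 'b, 's) sched \<Rightarrow> bool" where
  "valid_sched act test Sc \<longleftrightarrow>
     (\<forall>h c d. Sc (h, c) = Some d \<longrightarrow> (\<exists>ws. convex_steps act test c ws \<and> d = comb ws))"

primrec bigstep :: "('a \<Rightarrow> 's \<Rightarrow> 's dist) \<Rightarrow> ('b \<Rightarrow> 's \<Rightarrow> bool) \<Rightarrow> ('a, 'b, 's) sched \<Rightarrow> nat \<Rightarrow>
    (('a, 'b, 's) conf \<times> ('a, 'b, 's) res dist) list \<Rightarrow> ('a, 'b, 's) conf \<Rightarrow> 's dist \<Rightarrow> bool" where
  "bigstep act test Sc 0 h c \<mu> \<longleftrightarrow> \<mu> = zero_dist"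
| "bigstep act test Sc (Suc n) h c \<mu> \<longleftrightarrow>
     (\<exists>ws m. convex_steps act test c ws \<and> Sc (h, c) = Some (comb ws)
        \<and> (\<forall>k<length ws. \<forall>c'. snd (ws ! k) (Inr c') \<noteq> 0 \<longrightarrow>
              bigstep act test Sc n (h @ [(c, snd (ws ! k))]) c' (m k c'))
        \<and> \<mu> = (\<lambda>t. \<Sum>k<length ws. fst (ws ! k) *
                  ((\<Sum>c'\<in>{c'. snd (ws ! k) (Inr c') \<noteq> 0}. snd (ws ! k) (Inr c') * m k c' t)
                   + snd (ws ! k) (Inl t))))"

definition non_blocking :: "('a \<Rightarrow> 's \<Rightarrow> 's dist) \<Rightarrow> ('b \<Rightarrow> 's \<Rightarrow> bool) \<Rightarrow>
    ('a, 'b, 's) sched \<Rightarrow> ('a, 'b) prog \<Rightarrow> 's \<Rightarrow> bool" where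
  "non_blocking act test Sc P s \<longleftrightarrow> (\<forall>n. \<exists>\<mu>. bigstep act test Sc n [] (P, s) \<mu>)"

definition sat_box :: "('a \<Rightarrow> 's \<Rightarrow> 's dist) \<Rightarrow> ('b \<Rightarrow> 's \<Rightarrow> bool) \<Rightarrow>
    ('a, 'b) prog \<Rightarrow> 's \<Rightarrow> real \<Rightarrow> 's set \<Rightarrow> bool" where
  "sat_box act test P s p U \<longleftrightarrow>
     (\<forall>Sc. valid_sched act test Sc \<longrightarrow> non_blocking act test Sc P s \<longrightarrow>
        (\<exists>n \<mu>. bigstep act test Sc n [] (P, s) \<mu> \<and> mass \<mu> U > p))"

primrec Fset :: "('a \<Rightarrow> 's \<Rightarrow> 's dist) \<Rightarrow> ('b \<Rightarrow> 's \<Rightarrow> bool) \<Rightarrow> nat \<Rightarrow>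
    ('a, 'b) prog \<Rightarrow> 's \<Rightarrow> 's dist set" where
  "Fset act test 0 P s = {zero_dist}"
| "Fset act test (Suc n) P s =
     {\<mu>. \<exists>\<nu> f. step act test P s \<nu>
          \<and> (\<forall>c'. \<nu> (Inr c') \<noteq> 0 \<longrightarrow> f c' \<in> Fset act test n (fst c') (snd c'))
          \<and> \<mu> = (\<lambda>t. (\<Sum>c'\<in>{c'. \<nu> (Inr c') \<noteq> 0}. \<nu> (Inr c') * f c' t) + \<nu> (Inl t))}"

end

theory Submission
  imports Defs "HOL-Library.Infinite_Set"
begin

text \<open>Let V_n(c) (min_mass n c below) be the least U-mass of a distribution in F_n(c). Since every configuration has
  only finitely many transitions, V_n satisfies the value-iteration recursion
  V_{n+1}(c) = min over transitions \<nu> of \<Sum> \<nu>(c') V_n(c') + \<nu>(U), and V_n is non-decreasing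
  in n. An n-step big-step result of any scheduler is a convex combination of such recursions and
  so has U-mass at least V_n(P,s); this gives one direction.
  Conversely, if V_n(P,s) \<le> p and F_n(P,s) \<noteq> {} for all n, a memoryless scheduler that at each
  configuration takes a transition which is a minimiser for infinitely many n (pigeonhole over the
  finitely many transitions) never blocks, and each of its results is bounded by some
  V_M(P,s) \<le> p.\<close>

lemma mass_eq_sum_superset: "finite B \<Longrightarrow> supp \<mu> \<subseteq> B \<Longrightarrow> mass \<mu> U = sum \<mu> (B \<inter> U)"
  unfolding mass_def by (rule sum.mono_neutral_left) (auto simp: supp_def)

lemma supp_zero_dist [simp]: "supp zero_dist = {}"
  by (simp add: zero_dist_def supp_def)

lemma mass_zero_dist [simp]: "mass zero_dist U = 0"
  by (simp add: mass_def)

lemma mass_nonneg: "(\<And>x. 0 \<le> \<mu> x) \<Longrightarrow> 0 \<le> mass \<mu> U"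
  by (simp add: mass_def sum_nonneg)

lemma supp_weighted_sum_subset: "supp (\<lambda>t. \<Sum>i\<in>I. w i * F i t) \<subseteq> (\<Union>i\<in>I. supp (F i))"
  by (auto simp: supp_def intro: ccontr sum.neutral)

lemma finite_supp_weighted_sum:
  "finite I \<Longrightarrow> (\<And>i. i \<in> I \<Longrightarrow> finite (supp (F i))) \<Longrightarrow> finite (supp (\<lambda>t. \<Sum>i\<in>I. w i * F i t))"
  by (rule finite_subset[OF supp_weighted_sum_subset]) auto

lemma mass_weighted_sum:
  assumes "finite I" "\<And>i. i \<in> I \<Longrightarrow> finite (supp (F i))"
  shows "mass (\<lambda>t. \<Sum>i\<in>I. w i * F i t) U = (\<Sum>i\<in>I. w i * mass (F i) U)"
proof -
  let ?B = "\<Union>i\<in>I. supp (F i)"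
  have B: "finite ?B" using assms by blast
  have "mass (\<lambda>t. \<Sum>i\<in>I. w i * F i t) U = (\<Sum>t\<in>?B \<inter> U. \<Sum>i\<in>I. w i * F i t)"
    by (rule mass_eq_sum_superset[OF B supp_weighted_sum_subset])
  also have "\<dots> = (\<Sum>i\<in>I. w i * (\<Sum>t\<in>?B \<inter> U. F i t))"
    by (simp add: sum.swap[where A = I] sum_distrib_left)
  also have "\<dots> = (\<Sum>i\<in>I. w i * mass (F i) U)"
    by (intro sum.cong refl arg_cong2[where f = "(*)"] mass_eq_sum_superset[OF B, symmetric]) auto
  finally show ?thesis .
qed

lemma finite_supp_add:
  "finite (supp \<mu>) \<Longrightarrow> finite (supp \<nu>) \<Longrightarrow> finite (supp (\<lambda>t. \<mu> t + \<nu> t))"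
  by (rule finite_subset[of _ "supp \<mu> \<union> supp \<nu>"]) (auto simp: supp_def)

lemma mass_add:
  assumes "finite (supp \<mu>)" "finite (supp \<nu>)"
  shows "mass (\<lambda>t. \<mu> t + \<nu> t) U = mass \<mu> U + mass \<nu> U"
proof -
  let ?B = "supp \<mu> \<union> supp \<nu>"
  have B: "finite ?B" using assms by blast
  have "mass (\<lambda>t. \<mu> t + \<nu> t) U = sum (\<lambda>t. \<mu> t + \<nu> t) (?B \<inter> U)"
    by (rule mass_eq_sum_superset[OF B]) (auto simp: supp_def)
  also have "\<dots> = mass \<mu> U + mass \<nu> U"
    by (simp add: sum.distrib mass_eq_sum_superset[OF B])
  finally show ?thesis .
qed

lemma finite_Inr_supp: "finite (supp \<nu>) \<Longrightarrow> finite {y. \<nu> (Inr y) \<noteq> 0}"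
  using finite_vimageI[of "supp \<nu>" Inr] by (simp add: supp_def vimage_def)

lemma finite_supp_Inl: "finite (supp \<nu>) \<Longrightarrow> finite (supp (\<lambda>x. \<nu> (Inl x)))"
  using finite_vimageI[of "supp \<nu>" Inl] by (simp add: supp_def vimage_def)

lemma dmap_nonneg_finite:
  assumes "\<forall>x. 0 \<le> \<mu> x" "finite (supp \<mu>)"
  shows "(\<forall>y. 0 \<le> dmap f \<mu> y) \<and> finite (supp (dmap f \<mu>))"
proof
  show "\<forall>y. 0 \<le> dmap f \<mu> y" using assms by (simp add: dmap_def sum_nonneg)
  have "supp (dmap f \<mu>) \<subseteq> f ` supp \<mu>"
  proof (rule subsetI, rule ccontr)
    fix y assume "y \<in> supp (dmap f \<mu>)" "y \<notin> f ` supp \<mu>"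
    then have "{x \<in> supp \<mu>. f x = y} = {}" by auto
    then have "dmap f \<mu> y = 0" unfolding dmap_def by (simp only: sum.empty)
    then show False using \<open>y \<in> supp (dmap f \<mu>)\<close> by (simp add: supp_def)
  qed
  then show "finite (supp (dmap f \<mu>))" using assms by (meson finite_imageI finite_subset)
qed

lemma comb_nonzero:
  assumes nonneg: "\<And>j z. j < length ws \<Longrightarrow> 0 \<le> fst (ws ! j) \<and> 0 \<le> snd (ws ! j) z"
    and k: "k < length ws" "fst (ws ! k) \<noteq> 0" "snd (ws ! k) z \<noteq> 0"
  shows "comb ws z \<noteq> 0"
proof -
  have "0 < fst (ws ! k) * snd (ws ! k) z"
    using nonneg[of k z] k by (simp add: less_eq_real_def)
  also have "\<dots> \<le> (\<Sum>j<length ws. fst (ws ! j) * snd (ws ! j) z)"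
    using nonneg k by (intro member_le_sum) auto
  finally show ?thesis by (simp add: comb_def)
qed

text \<open>For a transition \<nu> = \<Sum>i p_i<P_i,s_i> + \<Sum>j p_j s_j, glue \<nu> f = \<Sum>i p_i f<P_i,s_i> + \<Sum>j p_j \<delta>_{s_j}
  is the shape of the elements of F_{n+1} and of big-step results, and step_value U W \<nu> is its
  U-mass when each f<P_i,s_i> has U-mass W<P_i,s_i> (mass_glue).\<close>

definition glue :: "('x + 'y) dist \<Rightarrow> ('y \<Rightarrow> 'x dist) \<Rightarrow> 'x dist" where
  "glue \<nu> f = (\<lambda>t. (\<Sum>y\<in>{y. \<nu> (Inr y) \<noteq> 0}. \<nu> (Inr y) * f y t) + \<nu> (Inl t))"

definition step_value :: "'x set \<Rightarrow> ('y \<Rightarrow> real) \<Rightarrow> ('x + 'y) dist \<Rightarrow> real" where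
  "step_value U W \<nu> = (\<Sum>y\<in>{y. \<nu> (Inr y) \<noteq> 0}. \<nu> (Inr y) * W y) + mass (\<lambda>x. \<nu> (Inl x)) U"

lemma mass_glue:
  assumes "finite (supp \<nu>)" "\<And>y. \<nu> (Inr y) \<noteq> 0 \<Longrightarrow> finite (supp (f y))"
  shows "mass (glue \<nu> f) U = step_value U (\<lambda>y. mass (f y) U) \<nu>"
    and "finite (supp (glue \<nu> f))"
proof -
  have sum: "finite (supp (\<lambda>t. \<Sum>y\<in>{y. \<nu> (Inr y) \<noteq> 0}. \<nu> (Inr y) * f y t))"
    using assms by (intro finite_supp_weighted_sum finite_Inr_supp) auto
  note Inl = finite_supp_Inl[OF assms(1)]
  show "finite (supp (glue \<nu> f))"
    unfolding glue_def by (rule finite_supp_add[OF sum Inl])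
  show "mass (glue \<nu> f) U = step_value U (\<lambda>y. mass (f y) U) \<nu>"
    unfolding glue_def step_value_def mass_add[OF sum Inl]
    using assms by (subst mass_weighted_sum) (auto intro: finite_Inr_supp)
qed

lemma step_value_mono:
  "(\<And>z. 0 \<le> \<nu> z) \<Longrightarrow> (\<And>y. \<nu> (Inr y) \<noteq> 0 \<Longrightarrow> W y \<le> W' y) \<Longrightarrow> step_value U W \<nu> \<le> step_value U W' \<nu>"
  unfolding step_value_def by (intro add_right_mono sum_mono mult_left_mono) auto

lemma step_value_nonneg: "(\<And>z. 0 \<le> \<nu> z) \<Longrightarrow> (\<And>y. 0 \<le> W y) \<Longrightarrow> 0 \<le> step_value U W \<nu>"
  unfolding step_value_def by (intro add_nonneg_nonneg sum_nonneg mult_nonneg_nonneg mass_nonneg) auto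

lemma step_value_superset:
  "finite B \<Longrightarrow> {y. \<nu> (Inr y) \<noteq> 0} \<subseteq> B \<Longrightarrow>
    step_value U W \<nu> = (\<Sum>y\<in>B. \<nu> (Inr y) * W y) + mass (\<lambda>x. \<nu> (Inl x)) U"
  unfolding step_value_def by (subst sum.mono_neutral_left[of B]) auto

lemma step_value_comb:
  assumes fin: "\<And>k. k < length ws \<Longrightarrow> finite (supp (snd (ws ! k)))"
  shows "step_value U W (comb ws) = (\<Sum>k<length ws. fst (ws ! k) * step_value U W (snd (ws ! k)))"
proof -
  define B where "B = (\<Union>k<length ws. {y. snd (ws ! k) (Inr y) \<noteq> 0})"
  have B: "finite B" using fin finite_Inr_supp by (auto simp: B_def)
  have "{y. comb ws (Inr y) \<noteq> 0} \<subseteq> B"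
    by (auto simp: B_def comb_def intro: ccontr sum.neutral)
  then have "step_value U W (comb ws) =
      (\<Sum>y\<in>B. comb ws (Inr y) * W y) + mass (\<lambda>x. \<Sum>k<length ws. fst (ws ! k) * snd (ws ! k) (Inl x)) U"
    by (simp add: step_value_superset[OF B] comb_def)
  also have "mass (\<lambda>x. \<Sum>k<length ws. fst (ws ! k) * snd (ws ! k) (Inl x)) U =
      (\<Sum>k<length ws. fst (ws ! k) * mass (\<lambda>x. snd (ws ! k) (Inl x)) U)"
    by (rule mass_weighted_sum) (use fin finite_supp_Inl in auto)
  also have "(\<Sum>y\<in>B. comb ws (Inr y) * W y) + (\<Sum>k<length ws. fst (ws ! k) * mass (\<lambda>x. snd (ws ! k) (Inl x)) U)
      = (\<Sum>k<length ws. fst (ws ! k) *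
      ((\<Sum>y\<in>B. snd (ws ! k) (Inr y) * W y) + mass (\<lambda>x. snd (ws ! k) (Inl x)) U))"
    by (simp add: comb_def sum_distrib_left sum_distrib_right sum.swap[where A = B]
        distrib_left sum.distrib mult.assoc)
  also have "\<dots> = (\<Sum>k<length ws. fst (ws ! k) * step_value U W (snd (ws ! k)))"
    by (intro sum.cong refl arg_cong2[where f = "(*)"] step_value_superset[OF B, symmetric])
      (auto simp: B_def)
  finally show ?thesis .
qed

inductive_cases step_SkipE: "step act test Skip s \<nu>"
inductive_cases step_ActE: "step act test (Act a) s \<nu>"
inductive_cases step_SeqE: "step act test (Seq P Q) s \<nu>"
inductive_cases step_ParE: "step act test (Par P Q) s \<nu>"
inductive_cases step_PChE: "step act test (PCh p P Q) s \<nu>"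
inductive_cases step_NChE: "step act test (NCh P Q) s \<nu>"
inductive_cases step_IfE: "step act test (If b P Q) s \<nu>"
inductive_cases step_WhileE: "step act test (While b P) s \<nu>"

lemma finite_steps: "finite {\<nu>. step act test P s \<nu>}"
proof (induction P arbitrary: s)
  case Skip
  have "{\<nu>. step act test Skip s \<nu>} \<subseteq> {point (Inl s)}" by (auto elim: step_SkipE)
  then show ?case by (rule finite_subset) simp
next
  case (Act a)
  have "{\<nu>. step act test (Act a) s \<nu>} \<subseteq> {dmap Inl (act a s)}" by (auto elim: step_ActE)
  then show ?case by (rule finite_subset) simp
next
  case (Seq P Q)
  have "{\<nu>. step act test (Seq P Q) s \<nu>} \<subseteq> dmap (seq_cont Q) ` {\<nu>. step act test P s \<nu>}"
    by (auto elim: step_SeqE)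
  then show ?case using Seq by (meson finite_imageI finite_subset)
next
  case (Par P Q)
  have "{\<nu>. step act test (Par P Q) s \<nu>} \<subseteq> dmap (parL_cont Q) ` {\<nu>. step act test P s \<nu>}
      \<union> dmap (parR_cont P) ` {\<nu>. step act test Q s \<nu>}"
    by (auto elim: step_ParE)
  then show ?case using Par by (meson finite_imageI finite_subset finite_UnI)
next
  case (PCh p P Q)
  have "{\<nu>. step act test (PCh p P Q) s \<nu>} \<subseteq> (\<lambda>(\<mu>, \<nu>) x. p * \<mu> x + (1 - p) * \<nu> x) `
      ({\<nu>. step act test P s \<nu>} \<times> {\<nu>. step act test Q s \<nu>})"
    by (auto elim!: step_PChE)
  then show ?case
    by (rule finite_subset) (use PCh in \<open>blast intro: finite_imageI finite_cartesian_product\<close>)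
next
  case (NCh P Q)
  have "{\<nu>. step act test (NCh P Q) s \<nu>} \<subseteq> {\<nu>. step act test P s \<nu>} \<union> {\<nu>. step act test Q s \<nu>}"
    by (auto elim: step_NChE)
  then show ?case using NCh by (meson finite_subset finite_UnI)
next
  case (If b P Q)
  have "{\<nu>. step act test (If b P Q) s \<nu>} \<subseteq> {point (Inr (P, s)), point (Inr (Q, s))}"
    by (auto elim: step_IfE)
  then show ?case by (rule finite_subset) simp
next
  case (While b P)
  have "{\<nu>. step act test (While b P) s \<nu>} \<subseteq> {point (Inr (Seq P (While b P), s)), point (Inl s)}"
    by (auto elim: step_WhileE)
  then show ?case by (rule finite_subset) simp
qed

locale reachability =
  fixes act :: "'a \<Rightarrow> 's \<Rightarrow> 's dist" and test :: "'b \<Rightarrow> 's \<Rightarrow> bool" and U :: "'s set"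
  assumes act_dist: "\<And>a t. is_dist (act a t)"
begin

lemma step_nonneg_finite: "step act test P s \<nu> \<Longrightarrow> (\<forall>z. 0 \<le> \<nu> z) \<and> finite (supp \<nu>)"
proof (induction rule: step.induct)
  case (st_act a s)
  then show ?case using act_dist[of a s] dmap_nonneg_finite[of "act a s"] by (auto simp: is_dist_def)
next
  case (st_pch p P s \<mu> Q \<nu>)
  have "supp (\<lambda>x. p * \<mu> x + (1 - p) * \<nu> x) \<subseteq> supp \<mu> \<union> supp \<nu>" by (auto simp: supp_def)
  then show ?case using st_pch by (auto intro: finite_subset)
qed (simp_all add: dmap_nonneg_finite, simp_all add: point_def supp_def)

lemma step_nonneg: "step act test P s \<nu> \<Longrightarrow> 0 \<le> \<nu> z"
  using step_nonneg_finite by blast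

lemma step_finite_supp: "step act test P s \<nu> \<Longrightarrow> finite (supp \<nu>)"
  using step_nonneg_finite by blast

lemma convex_stepsD:
  "convex_steps act test c ws \<Longrightarrow> k < length ws \<Longrightarrow>
    0 \<le> fst (ws ! k) \<and> step act test (fst c) (snd c) (snd (ws ! k))"
  by (simp add: convex_steps_def)

text \<open>live n c holds iff F_n(c) is nonempty, and min_mass n c is then the least U-mass of a
  distribution in F_n(c) (Fset_min_mass_le, Fset_attains_min_mass). Min is applied to a finite
  set by finite_steps, which is empty exactly when live (Suc n) c fails.\<close>

primrec live :: "nat \<Rightarrow> ('a, 'b, 's) conf \<Rightarrow> bool" where
  "live 0 c = True"
| "live (Suc n) c \<longleftrightarrow>
     (\<exists>\<nu>. step act test (fst c) (snd c) \<nu> \<and> (\<forall>c'. \<nu> (Inr c') \<noteq> 0 \<longrightarrow> live n c'))"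

definition live_steps :: "nat \<Rightarrow> ('a, 'b, 's) conf \<Rightarrow> ('a, 'b, 's) res dist set" where
  "live_steps n c = {\<nu>. step act test (fst c) (snd c) \<nu> \<and> (\<forall>c'. \<nu> (Inr c') \<noteq> 0 \<longrightarrow> live n c')}"

primrec min_mass :: "nat \<Rightarrow> ('a, 'b, 's) conf \<Rightarrow> real" where
  "min_mass 0 c = 0"
| "min_mass (Suc n) c = Min (step_value U (min_mass n) ` live_steps n c)"

lemma finite_live_steps: "finite (live_steps n c)"
  unfolding live_steps_def by (rule finite_subset[OF _ finite_steps]) auto

lemma live_Suc_iff: "live (Suc n) c \<longleftrightarrow> live_steps n c \<noteq> {}"
  by (auto simp: live_steps_def)

lemma min_mass_le: "\<nu> \<in> live_steps n c \<Longrightarrow> min_mass (Suc n) c \<le> step_value U (min_mass n) \<nu>"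
  using finite_live_steps by simp

lemma min_mass_attained:
  assumes "live (Suc n) c"
  obtains \<nu> where "\<nu> \<in> live_steps n c" "min_mass (Suc n) c = step_value U (min_mass n) \<nu>"
proof -
  have "live_steps n c \<noteq> {}" using assms live_Suc_iff by blast
  then have "min_mass (Suc n) c \<in> step_value U (min_mass n) ` live_steps n c"
    using finite_live_steps by simp
  then show ?thesis using that by blast
qed

lemma live_Suc_imp_live: "live (Suc n) c \<Longrightarrow> live n c"
proof (induction n arbitrary: c)
  case (Suc n)
  then show ?case by (metis live.simps(2))
qed simp

lemma live_mono: "n \<le> m \<Longrightarrow> live m c \<Longrightarrow> live n c"
proof (induction m)
  case (Suc m)
  then show ?case using live_Suc_imp_live le_Suc_eq by blast
qed simp

lemma min_mass_le_Suc: "live (Suc n) c \<Longrightarrow> min_mass n c \<le> min_mass (Suc n) c"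
proof (induction n arbitrary: c)
  case 0
  then obtain \<nu> where "\<nu> \<in> live_steps 0 c" "min_mass (Suc 0) c = step_value U (min_mass 0) \<nu>"
    by (rule min_mass_attained)
  then show ?case by (auto simp: live_steps_def intro: step_value_nonneg step_nonneg)
next
  case (Suc n)
  obtain \<nu> where \<nu>: "\<nu> \<in> live_steps (Suc n) c"
      and eq: "min_mass (Suc (Suc n)) c = step_value U (min_mass (Suc n)) \<nu>"
    using Suc.prems by (rule min_mass_attained)
  then have "\<nu> \<in> live_steps n c"
    by (auto simp: live_steps_def intro: live_Suc_imp_live)
  then have "min_mass (Suc n) c \<le> step_value U (min_mass n) \<nu>" by (rule min_mass_le)
  also have "\<dots> \<le> step_value U (min_mass (Suc n)) \<nu>"
    using \<nu> Suc.IH by (intro step_value_mono) (auto simp: live_steps_def intro: step_nonneg)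
  finally show ?case by (simp only: eq)
qed

lemma min_mass_mono: "n \<le> m \<Longrightarrow> live m c \<Longrightarrow> min_mass n c \<le> min_mass m c"
proof (induction m)
  case (Suc m)
  show ?case
  proof (cases "n = Suc m")
    case False
    then have "n \<le> m" using Suc.prems(1) by simp
    then have "min_mass n c \<le> min_mass m c" using Suc.IH Suc.prems(2) live_Suc_imp_live by blast
    also have "\<dots> \<le> min_mass (Suc m) c" using Suc.prems(2) by (rule min_mass_le_Suc)
    finally show ?thesis .
  qed simp
qed simp

lemma mem_Fset_Suc_iff:
  "\<phi> \<in> Fset act test (Suc n) P s \<longleftrightarrow> (\<exists>\<nu> f. step act test P s \<nu>
     \<and> (\<forall>c'. \<nu> (Inr c') \<noteq> 0 \<longrightarrow> f c' \<in> Fset act test n (fst c') (snd c')) \<and> \<phi> = glue \<nu> f)"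
  by (simp add: glue_def)

lemma Fset_min_mass_le:
  "\<phi> \<in> Fset act test n (fst c) (snd c) \<Longrightarrow>
    finite (supp \<phi>) \<and> live n c \<and> min_mass n c \<le> mass \<phi> U"
proof (induction n arbitrary: c \<phi>)
  case (Suc n)
  then obtain \<nu> f where st: "step act test (fst c) (snd c) \<nu>"
    and f: "\<And>c'. \<nu> (Inr c') \<noteq> 0 \<Longrightarrow> f c' \<in> Fset act test n (fst c') (snd c')"
    and \<phi>: "\<phi> = glue \<nu> f"
    unfolding mem_Fset_Suc_iff by blast
  have IH: "\<And>c'. \<nu> (Inr c') \<noteq> 0 \<Longrightarrow> finite (supp (f c')) \<and> live n c' \<and> min_mass n c' \<le> mass (f c') U"
    using Suc.IH f by blast
  note glue = mass_glue[OF step_finite_supp[OF st], where f = f]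
  have \<nu>: "\<nu> \<in> live_steps n c" using st IH by (auto simp: live_steps_def)
  then have "min_mass (Suc n) c \<le> step_value U (min_mass n) \<nu>" by (rule min_mass_le)
  also have "\<dots> \<le> step_value U (\<lambda>c'. mass (f c') U) \<nu>"
    using IH st by (intro step_value_mono step_nonneg) auto
  finally show ?case using \<nu> IH glue live_Suc_iff \<phi> by auto
qed simp

lemma Fset_attains_min_mass:
  "live n c \<Longrightarrow> \<exists>\<phi>\<in>Fset act test n (fst c) (snd c). mass \<phi> U = min_mass n c"
proof (induction n arbitrary: c)
  case (Suc n)
  then obtain \<nu> where \<nu>: "\<nu> \<in> live_steps n c" and eq: "min_mass (Suc n) c = step_value U (min_mass n) \<nu>"
    by (blast elim: min_mass_attained)
  then have st: "step act test (fst c) (snd c) \<nu>" by (simp add: live_steps_def)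
  have "\<forall>c'. \<exists>\<phi>. \<nu> (Inr c') \<noteq> 0 \<longrightarrow> \<phi> \<in> Fset act test n (fst c') (snd c') \<and> mass \<phi> U = min_mass n c'"
    using Suc.IH \<nu> unfolding live_steps_def by blast
  then obtain f where f: "\<And>c'. \<nu> (Inr c') \<noteq> 0 \<Longrightarrow>
      f c' \<in> Fset act test n (fst c') (snd c') \<and> mass (f c') U = min_mass n c'"
    by metis
  have "glue \<nu> f \<in> Fset act test (Suc n) (fst c) (snd c)"
    unfolding mem_Fset_Suc_iff using st f by blast
  moreover have "mass (glue \<nu> f) U = min_mass (Suc n) c"
  proof -
    have "\<And>c'. \<nu> (Inr c') \<noteq> 0 \<Longrightarrow> finite (supp (f c'))"
      using f Fset_min_mass_le by blast
    then have "mass (glue \<nu> f) U = step_value U (\<lambda>c'. mass (f c') U) \<nu>"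
      using mass_glue(1) step_finite_supp[OF st] by blast
    also have "\<dots> = step_value U (min_mass n) \<nu>"
      using f by (simp add: step_value_def)
    finally show ?thesis by (simp only: eq)
  qed
  ultimately show ?case by blast
qed simp

lemma bigstep_SucE:
  assumes "bigstep act test Sc (Suc n) h c \<mu>"
  obtains ws m where "convex_steps act test c ws" "Sc (h, c) = Some (comb ws)"
    and "\<And>k c'. k < length ws \<Longrightarrow> snd (ws ! k) (Inr c') \<noteq> 0 \<Longrightarrow>
      bigstep act test Sc n (h @ [(c, snd (ws ! k))]) c' (m k c')"
    and "\<mu> = (\<lambda>t. \<Sum>k<length ws. fst (ws ! k) * glue (snd (ws ! k)) (m k) t)"
  using assms unfolding bigstep.simps glue_def by blast

lemma mass_weighted_glue:
  assumes ws: "convex_steps act test c ws"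
    and m: "\<And>k c'. k < length ws \<Longrightarrow> snd (ws ! k) (Inr c') \<noteq> 0 \<Longrightarrow> finite (supp (m k c'))"
  shows "mass (\<lambda>t. \<Sum>k<length ws. fst (ws ! k) * glue (snd (ws ! k)) (m k) t) U =
      (\<Sum>k<length ws. fst (ws ! k) * step_value U (\<lambda>c'. mass (m k c') U) (snd (ws ! k)))"
    and "finite (supp (\<lambda>t. \<Sum>k<length ws. fst (ws ! k) * glue (snd (ws ! k)) (m k) t))"
proof -
  have glue: "mass (glue (snd (ws ! k)) (m k)) U = step_value U (\<lambda>c'. mass (m k c') U) (snd (ws ! k))
      \<and> finite (supp (glue (snd (ws ! k)) (m k)))" if "k < length ws" for k
    using mass_glue[OF step_finite_supp] convex_stepsD[OF ws that] m that by blast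
  then show "finite (supp (\<lambda>t. \<Sum>k<length ws. fst (ws ! k) * glue (snd (ws ! k)) (m k) t))"
    by (intro finite_supp_weighted_sum) auto
  show "mass (\<lambda>t. \<Sum>k<length ws. fst (ws ! k) * glue (snd (ws ! k)) (m k) t) U =
      (\<Sum>k<length ws. fst (ws ! k) * step_value U (\<lambda>c'. mass (m k c') U) (snd (ws ! k)))"
    using glue by (subst mass_weighted_sum) auto
qed

lemma bigstep_SucI:
  assumes "convex_steps act test c ws" "Sc (h, c) = Some (comb ws)"
    and "\<And>k c'. k < length ws \<Longrightarrow> snd (ws ! k) (Inr c') \<noteq> 0 \<Longrightarrow>
      bigstep act test Sc n (h @ [(c, snd (ws ! k))]) c' (m k c')"
  shows "bigstep act test Sc (Suc n) h c (\<lambda>t. \<Sum>k<length ws. fst (ws ! k) * glue (snd (ws ! k)) (m k) t)"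
  using assms unfolding bigstep.simps glue_def by blast

lemma finite_supp_bigstep: "bigstep act test Sc n h c \<mu> \<Longrightarrow> finite (supp \<mu>)"
proof (induction n arbitrary: h c \<mu>)
  case (Suc n)
  from Suc.prems obtain ws m where ws: "convex_steps act test c ws"
    and m: "\<And>k c'. k < length ws \<Longrightarrow> snd (ws ! k) (Inr c') \<noteq> 0 \<Longrightarrow>
      bigstep act test Sc n (h @ [(c, snd (ws ! k))]) c' (m k c')"
    and \<mu>: "\<mu> = (\<lambda>t. \<Sum>k<length ws. fst (ws ! k) * glue (snd (ws ! k)) (m k) t)"
    by (blast elim: bigstep_SucE)
  show ?case
    unfolding \<mu> by (rule mass_weighted_glue(2)[OF ws]) (use m Suc.IH in blast)
qed simp

lemma bigstep_min_mass_le: "bigstep act test Sc n h c \<mu> \<Longrightarrow> live n c \<and> min_mass n c \<le> mass \<mu> U"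
proof (induction n arbitrary: h c \<mu>)
  case (Suc n)
  from Suc.prems obtain ws m where ws: "convex_steps act test c ws"
    and m: "\<And>k c'. k < length ws \<Longrightarrow> snd (ws ! k) (Inr c') \<noteq> 0 \<Longrightarrow>
              bigstep act test Sc n (h @ [(c, snd (ws ! k))]) c' (m k c')"
    and \<mu>: "\<mu> = (\<lambda>t. \<Sum>k<length ws. fst (ws ! k) * glue (snd (ws ! k)) (m k) t)"
    by (blast elim: bigstep_SucE)
  have IH: "\<And>k c'. k < length ws \<Longrightarrow> snd (ws ! k) (Inr c') \<noteq> 0 \<Longrightarrow>
      live n c' \<and> min_mass n c' \<le> mass (m k c') U"
    using m Suc.IH by blast
  have live: "snd (ws ! k) \<in> live_steps n c" if "k < length ws" for k
    using convex_stepsD[OF ws that] IH that by (auto simp: live_steps_def)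
  have weights: "(\<Sum>k<length ws. fst (ws ! k)) = 1" using ws by (simp add: convex_steps_def)
  then have "length ws \<noteq> 0" by auto
  then have "live (Suc n) c" using live live_Suc_iff by blast
  have "min_mass (Suc n) c = (\<Sum>k<length ws. fst (ws ! k) * min_mass (Suc n) c)"
    by (simp add: weights flip: sum_distrib_right)
  also have "\<dots> \<le> (\<Sum>k<length ws. fst (ws ! k) * step_value U (\<lambda>c'. mass (m k c') U) (snd (ws ! k)))"
  proof (intro sum_mono mult_left_mono)
    fix k assume k: "k \<in> {..<length ws}"
    have "min_mass (Suc n) c \<le> step_value U (min_mass n) (snd (ws ! k))"
      using k by (intro min_mass_le live) simp
    also have "\<dots> \<le> step_value U (\<lambda>c'. mass (m k c') U) (snd (ws ! k))"
      using IH convex_stepsD[OF ws] k by (intro step_value_mono step_nonneg) auto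
    finally show "min_mass (Suc n) c \<le> step_value U (\<lambda>c'. mass (m k c') U) (snd (ws ! k))" .
    show "0 \<le> fst (ws ! k)" using convex_stepsD[OF ws] k by simp
  qed
  also have "\<dots> = mass \<mu> U"
    unfolding \<mu> by (rule mass_weighted_glue(1)[OF ws, symmetric]) (use m finite_supp_bigstep in blast)
  finally show ?case using \<open>live (Suc n) c\<close> by simp
qed simp

definition always_live :: "('a, 'b, 's) conf \<Rightarrow> bool" where
  "always_live c \<longleftrightarrow> (\<forall>n. live n c)"

lemma min_mass_uniform_bound:
  assumes "finite K" "\<And>x. x \<in> K \<Longrightarrow> always_live (g x) \<and> (\<exists>M. a x \<le> min_mass M (g x))"
  shows "\<exists>M. \<forall>x\<in>K. a x \<le> min_mass M (g x)"
  using assms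
proof (induction K rule: finite_induct)
  case (insert x K)
  then obtain M1 M2 where M1: "\<forall>y\<in>K. a y \<le> min_mass M1 (g y)" and M2: "a x \<le> min_mass M2 (g x)"
    by blast
  have "a y \<le> min_mass (max M1 M2) (g y)" if y: "y \<in> insert x K" for y
  proof -
    obtain M where M: "a y \<le> min_mass M (g y)" "M \<le> max M1 M2" using y M1 M2 by force
    have "live (max M1 M2) (g y)" using insert.prems y by (simp add: always_live_def)
    with M show ?thesis using min_mass_mono[of M "max M1 M2" "g y"] by linarith
  qed
  then show ?case by blast
qed simp

lemma recurrent_minimiser:
  assumes "always_live c"
  shows "\<exists>\<nu>. step act test (fst c) (snd c) \<nu> \<and> (\<forall>c'. \<nu> (Inr c') \<noteq> 0 \<longrightarrow> always_live c')
    \<and> infinite {n. step_value U (min_mass n) \<nu> \<le> min_mass (Suc n) c}"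
proof -
  have "\<forall>n. \<exists>\<nu>. \<nu> \<in> live_steps n c \<and> min_mass (Suc n) c = step_value U (min_mass n) \<nu>"
  proof
    fix n
    have "live (Suc n) c" using assms by (simp add: always_live_def)
    then obtain \<nu> where "\<nu> \<in> live_steps n c" "min_mass (Suc n) c = step_value U (min_mass n) \<nu>"
      by (rule min_mass_attained)
    then show "\<exists>\<nu>. \<nu> \<in> live_steps n c \<and> min_mass (Suc n) c = step_value U (min_mass n) \<nu>" by blast
  qed
  then obtain opt where
    "\<forall>n. opt n \<in> live_steps n c \<and> min_mass (Suc n) c = step_value U (min_mass n) (opt n)"
    by (rule choice[THEN exE])
  then have opt: "\<And>n. opt n \<in> live_steps n c"
    "\<And>n. min_mass (Suc n) c = step_value U (min_mass n) (opt n)"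
    by blast+
  have "range opt \<subseteq> {\<nu>. step act test (fst c) (snd c) \<nu>}"
    using opt by (auto simp: live_steps_def)
  then have "finite (range opt)" by (rule finite_subset[OF _ finite_steps])
  then obtain n0 where often: "infinite {n. opt n = opt n0}"
    using pigeonhole_infinite[of UNIV opt] by auto
  have "step act test (fst c) (snd c) (opt n0)"
    using opt by (simp add: live_steps_def)
  moreover have "always_live c'" if "opt n0 (Inr c') \<noteq> 0" for c'
    unfolding always_live_def
  proof
    fix n
    obtain n' where "n \<le> n'" "opt n' = opt n0"
      using often by (auto simp: infinite_nat_iff_unbounded_le)
    then have "opt n0 \<in> live_steps n' c" using opt(1)[of n'] by simp
    then have "live n' c'" using that unfolding live_steps_def by blast
    then show "live n c'" by (rule live_mono[OF \<open>n \<le> n'\<close>])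
  qed
  moreover have "{n. opt n = opt n0} \<subseteq> {n. step_value U (min_mass n) (opt n0) \<le> min_mass (Suc n) c}"
    using opt(2) by auto
  then have "infinite {n. step_value U (min_mass n) (opt n0) \<le> min_mass (Suc n) c}"
    using often by (meson finite_subset)
  ultimately show ?thesis by blast
qed

definition minimiser :: "('a, 'b, 's) conf \<Rightarrow> ('a, 'b, 's) res dist" where
  "minimiser c = (SOME \<nu>. step act test (fst c) (snd c) \<nu> \<and> (\<forall>c'. \<nu> (Inr c') \<noteq> 0 \<longrightarrow> always_live c')
    \<and> infinite {n. step_value U (min_mass n) \<nu> \<le> min_mass (Suc n) c})"

lemma minimiser:
  assumes "always_live c"
  shows "step act test (fst c) (snd c) (minimiser c)"
    and "\<And>c'. minimiser c (Inr c') \<noteq> 0 \<Longrightarrow> always_live c'"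
    and "infinite {n. step_value U (min_mass n) (minimiser c) \<le> min_mass (Suc n) c}"
  using someI_ex[OF recurrent_minimiser[OF assms]] unfolding minimiser_def by blast+

definition sched :: "('a, 'b, 's) sched" where
  "sched hc = (if always_live (snd hc) then Some (minimiser (snd hc)) else None)"

lemma valid_sched: "valid_sched act test sched"
  unfolding valid_sched_def
proof (intro allI impI)
  fix h c d assume "sched (h, c) = Some d"
  then have "always_live c" "d = comb [(1, minimiser c)]"
    by (auto simp: sched_def comb_def split: if_splits)
  then show "\<exists>ws. convex_steps act test c ws \<and> d = comb ws"
    using minimiser(1) by (intro exI[of _ "[(1, minimiser c)]"]) (auto simp: convex_steps_def)
qed

lemma sched_non_blocking: "always_live c \<Longrightarrow> \<exists>\<mu>. bigstep act test sched n h c \<mu>"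
proof (induction n arbitrary: h c)
  case (Suc n)
  let ?ws = "[(1::real, minimiser c)]"
  have "\<forall>c'. \<exists>\<mu>. minimiser c (Inr c') \<noteq> 0 \<longrightarrow> bigstep act test sched n (h @ [(c, minimiser c)]) c' \<mu>"
    using Suc minimiser(2) by blast
  then have "\<exists>m. \<forall>c'. minimiser c (Inr c') \<noteq> 0 \<longrightarrow> bigstep act test sched n (h @ [(c, minimiser c)]) c' (m c')"
    by (rule choice)
  then obtain m where "\<And>c'. minimiser c (Inr c') \<noteq> 0 \<Longrightarrow>
      bigstep act test sched n (h @ [(c, minimiser c)]) c' (m c')"
    by blast
  moreover have "convex_steps act test c ?ws" "sched (h, c) = Some (comb ?ws)"
    using Suc.prems minimiser(1) by (auto simp: convex_steps_def sched_def comb_def)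
  ultimately have "bigstep act test sched (Suc n) h c
      (\<lambda>t. \<Sum>k<length ?ws. fst (?ws ! k) * glue (snd (?ws ! k)) m t)"
    by (intro bigstep_SucI[where m = "\<lambda>_. m"]) auto
  then show ?case by blast
qed (auto intro: exI[of _ zero_dist])

lemma mass_bigstep_le_step_value_comb:
  assumes ws: "convex_steps act test c ws"
    and fin: "\<And>k c'. k < length ws \<Longrightarrow> snd (ws ! k) (Inr c') \<noteq> 0 \<Longrightarrow> finite (supp (m k c'))"
    and le: "\<And>k c'. k < length ws \<Longrightarrow> fst (ws ! k) \<noteq> 0 \<Longrightarrow> snd (ws ! k) (Inr c') \<noteq> 0 \<Longrightarrow>
      mass (m k c') U \<le> W c'"
  shows "mass (\<lambda>t. \<Sum>k<length ws. fst (ws ! k) * glue (snd (ws ! k)) (m k) t) U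
    \<le> step_value U W (comb ws)"
proof -
  have "mass (\<lambda>t. \<Sum>k<length ws. fst (ws ! k) * glue (snd (ws ! k)) (m k) t) U
      = (\<Sum>k<length ws. fst (ws ! k) * step_value U (\<lambda>c'. mass (m k c') U) (snd (ws ! k)))"
    by (rule mass_weighted_glue(1)[OF ws fin])
  also have "\<dots> \<le> (\<Sum>k<length ws. fst (ws ! k) * step_value U W (snd (ws ! k)))"
  proof (rule sum_mono)
    fix k assume k: "k \<in> {..<length ws}"
    then have w: "0 \<le> fst (ws ! k)" and st: "step act test (fst c) (snd c) (snd (ws ! k))"
      using convex_stepsD[OF ws] by auto
    have "fst (ws ! k) \<noteq> 0 \<Longrightarrow>
        step_value U (\<lambda>c'. mass (m k c') U) (snd (ws ! k)) \<le> step_value U W (snd (ws ! k))"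
      using k le by (intro step_value_mono) (auto intro: step_nonneg[OF st])
    then show "fst (ws ! k) * step_value U (\<lambda>c'. mass (m k c') U) (snd (ws ! k))
        \<le> fst (ws ! k) * step_value U W (snd (ws ! k))"
      using w by (cases "fst (ws ! k) = 0") (auto intro: mult_left_mono)
  qed
  also have "\<dots> = step_value U W (comb ws)"
    using convex_stepsD[OF ws] step_finite_supp by (intro step_value_comb[symmetric]) blast
  finally show ?thesis .
qed

lemma sched_successor_always_live:
  assumes ws: "convex_steps act test c ws" and "sched (h, c) = Some (comb ws)" "always_live c"
    and "k < length ws" "fst (ws ! k) \<noteq> 0" "snd (ws ! k) (Inr c') \<noteq> 0"
  shows "always_live c'"
proof -
  have "comb ws = minimiser c" using assms(2,3) by (simp add: sched_def)
  moreover have "\<And>j z. j < length ws \<Longrightarrow> 0 \<le> fst (ws ! j) \<and> 0 \<le> snd (ws ! j) z"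
    using convex_stepsD[OF ws] step_nonneg by blast
  ultimately have "minimiser c (Inr c') \<noteq> 0"
    using assms(4-6) comb_nonzero by metis
  then show ?thesis using minimiser(2)[OF assms(3)] by blast
qed

text \<open>The U-masses reached from the finitely many relevant successors are all below min_mass M
  for one M; the minimiser is optimal at infinitely many indices, hence at some M' \<ge> M.\<close>

lemma sched_mass_le_min_mass:
  "bigstep act test sched n h c \<mu> \<Longrightarrow> always_live c \<Longrightarrow> \<exists>M. mass \<mu> U \<le> min_mass M c"
proof (induction n arbitrary: h c \<mu>)
  case (Suc n)
  let ?\<nu> = "minimiser c"
  from Suc.prems(1) obtain ws m where ws: "convex_steps act test c ws"
    and sched: "sched (h, c) = Some (comb ws)"
    and m: "\<And>k c'. k < length ws \<Longrightarrow> snd (ws ! k) (Inr c') \<noteq> 0 \<Longrightarrow>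
      bigstep act test sched n (h @ [(c, snd (ws ! k))]) c' (m k c')"
    and \<mu>: "\<mu> = (\<lambda>t. \<Sum>k<length ws. fst (ws ! k) * glue (snd (ws ! k)) (m k) t)"
    by (blast elim: bigstep_SucE)
  have comb: "comb ws = ?\<nu>" using sched Suc.prems(2) by (simp add: sched_def)
  define K where
    "K = (SIGMA k:{k. k < length ws \<and> fst (ws ! k) \<noteq> 0}. {c'. snd (ws ! k) (Inr c') \<noteq> 0})"
  have "finite K"
    unfolding K_def
  proof (rule finite_SigmaI)
    fix k assume "k \<in> {k. k < length ws \<and> fst (ws ! k) \<noteq> 0}"
    then show "finite {c'. snd (ws ! k) (Inr c') \<noteq> 0}"
      using convex_stepsD[OF ws] by (blast intro: finite_Inr_supp step_finite_supp)
  qed simp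
  moreover have "always_live c' \<and> (\<exists>M. mass (m k c') U \<le> min_mass M c')" if "(k, c') \<in> K" for k c'
    using sched_successor_always_live[OF ws sched Suc.prems(2)] Suc.IH[OF m] that
    unfolding K_def by blast
  ultimately have "\<exists>M. \<forall>x\<in>K. mass (m (fst x) (snd x)) U \<le> min_mass M (snd x)"
    by (intro min_mass_uniform_bound) (auto simp: split_paired_all)
  then obtain M where M: "\<And>k c'. (k, c') \<in> K \<Longrightarrow> mass (m k c') U \<le> min_mass M c'"
    by force
  have "mass \<mu> U \<le> step_value U (min_mass M) ?\<nu>"
    unfolding \<mu> comb[symmetric]
    by (intro mass_bigstep_le_step_value_comb[OF ws finite_supp_bigstep[OF m]] M) (auto simp: K_def)
  moreover obtain M' where "M \<le> M'" "step_value U (min_mass M') ?\<nu> \<le> min_mass (Suc M') c"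
    using minimiser(3)[OF Suc.prems(2)] by (auto simp: infinite_nat_iff_unbounded_le)
  moreover have "step_value U (min_mass M) ?\<nu> \<le> step_value U (min_mass M') ?\<nu>"
    using \<open>M \<le> M'\<close> minimiser[OF Suc.prems(2)]
    by (intro step_value_mono step_nonneg min_mass_mono) (auto simp: always_live_def)
  ultimately show ?case by (meson order_trans)
qed (auto intro!: exI[of _ 0])

end

theorem mainTheorem11:
  fixes act :: "'a \<Rightarrow> 's \<Rightarrow> 's dist" and test :: "'b \<Rightarrow> 's \<Rightarrow> bool"
    and P :: "('a, 'b) prog" and s :: 's and U :: "'s set" and p :: real
  assumes "\<forall>a t. is_dist (act a t)"
    and "p \<in> \<rat>" and "0 \<le> p" and "p < 1"
  shows "sat_box act test P s p U \<longleftrightarrow> (\<exists>n. \<forall>\<mu>\<in>Fset act test n P s. mass \<mu> U > p)"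
proof -
  interpret reachability act test U using assms(1) by unfold_locales blast
  show ?thesis
  proof
    assume sat: "sat_box act test P s p U"
    show "\<exists>n. \<forall>\<mu>\<in>Fset act test n P s. mass \<mu> U > p"
    proof (rule ccontr)
      assume "\<nexists>n. \<forall>\<mu>\<in>Fset act test n P s. mass \<mu> U > p"
      then have bad: "\<forall>n. \<exists>\<phi>\<in>Fset act test n (fst (P, s)) (snd (P, s)). mass \<phi> U \<le> p"
        by (auto simp: not_less)
      then have live: "always_live (P, s)"
        using Fset_min_mass_le by (fastforce simp: always_live_def)
      have low: "min_mass n (P, s) \<le> p" for n
        using bad Fset_min_mass_le by (meson order_trans)
      obtain n \<mu> where \<mu>: "bigstep act test sched n [] (P, s) \<mu>" and "p < mass \<mu> U"
        using sat valid_sched sched_non_blocking[OF live] unfolding sat_box_def non_blocking_def by blast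
      moreover obtain M where "mass \<mu> U \<le> min_mass M (P, s)"
        using sched_mass_le_min_mass[OF \<mu> live] by blast
      ultimately show False using low[of M] by linarith
    qed
  next
    assume "\<exists>n. \<forall>\<mu>\<in>Fset act test n P s. mass \<mu> U > p"
    then obtain n where gt: "\<forall>\<mu>\<in>Fset act test n (fst (P, s)) (snd (P, s)). p < mass \<mu> U" by auto
    show "sat_box act test P s p U"
      unfolding sat_box_def non_blocking_def
    proof (intro allI impI)
      fix Sc assume "\<forall>n. \<exists>\<mu>. bigstep act test Sc n [] (P, s) \<mu>"
      then obtain \<mu> where \<mu>: "bigstep act test Sc n [] (P, s) \<mu>" by blast
      then have "live n (P, s)" and "min_mass n (P, s) \<le> mass \<mu> U"
        using bigstep_min_mass_le by blast+
      then have "p < mass \<mu> U" using gt Fset_attains_min_mass by fastforce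
      with \<mu> show "\<exists>n \<mu>. bigstep act test Sc n [] (P, s) \<mu> \<and> p < mass \<mu> U" by blast
    qed
  qed
qed

end
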